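(* Let $N=2^n$ with $n\geq10$, and let $K,\Delta>0$. Let $\tilde h_v=h_v+\Delta$ for $v\in\Lambda_N$. Then, for any realization of the field for which the ground states below are unique, the following two conditions cannot hold simultaneously: (a) $d_{\mathcal C_*^{\Lambda_N}}(\partial\Lambda_{N/4},\partial\Lambda_{N/2})\geq K$; (b) $|\mathcal C_*^{\Lambda_N}\cap\Lambda_{N/4}|\cdot\Delta>\frac{8}{K}|\mathcal C_*^{\Lambda_N}\cap\mathcal A_{N/2}|$.
   Context: Let $\{h_v:v\in\mathbb Z^2\}$ be real numbers (in the paper, i.i.d. centered Gaussians with variance $\epsilon^2$, for which all ground states are unique a.s.). Write $u\sim v$ if $|u-v|_1=1$; $\partial A=\{v\in\mathbb Z^2\setminus A:u\sim v\text{ for some }u\in A\}$; $\Lambda_r=\{v\in\mathbb Z^2:|v|_\infty\le r\}$; $\mathcal A_M=\Lambda_M\setminus\Lambda_{M/2}$, so $\mathcal A_{N/2}=\Lambda_{N/2}\setminus\Lambda_{N/4}$. For a field $g$ on $\Lambda_N$ and $\sigma\in\{-1,1\}^{\Lambda_N}$, $H^{\Lambda_N,\pm}_g(\sigma)=-\big(\sum_{u\sim v,\,u,v\in\Lambda_N}\sigma_u\sigma_v\pm\sum_{u\sim v,\,u\in\Lambda_N,v\in\partial\Lambda_N}\sigma_u+\sum_{u\in\Lambda_N}\sigma_ug_u\big)$, and the ground states $\sigma^{\Lambda_N,\pm}$ (for $g=h$) and $\tilde\sigma^{\Lambda_N,\pm}$ (for $g=\tilde h$) are the minimizers. $\mathcal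 C^{\Lambda_N}=\{v:\sigma^{\Lambda_N,+}_v=1,\sigma^{\Lambda_N,-}_v=-1\}$, $\tilde{\mathcal C}^{\Lambda_N}=\{v:\tilde\sigma^{\Lambda_N,+}_v=1,\tilde\sigma^{\Lambda_N,-}_v=-1\}$, and $\mathcal C_*^{\Lambda_N}=\mathcal C^{\Lambda_N}\cap\tilde{\mathcal C}^{\Lambda_N}$. $d_A$ is the graph distance on the subgraph induced on $A$, and $d_A(A_1,A_2)=\min_{x\in A_1\cap A,y\in A_2\cap A}d_A(x,y)$ with $\min\emptyset=\infty$. *)

theory Defs
  imports "HOL-Library.Extended_Real"
begin

type_synonym site = "int \<times> int"

definition adj :: "site \<Rightarrow> site \<Rightarrow> bool" where
  "adj u v \<longleftrightarrow> \<bar>fst u - fst v\<bar> + \<bar>snd u - snd v\<bar> = 1"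

definition bdry :: "site set \<Rightarrow> site set" where
  "bdry A = {v. v \<notin> A \<and> (\<exists>u\<in>A. adj u v)}"

definition box :: "int \<Rightarrow> site set" where
  "box r = {v. \<bar>fst v\<bar> \<le> r \<and> \<bar>snd v\<bar> \<le> r}"

definition configs :: "site set \<Rightarrow> (site \<Rightarrow> real) set" where
  "configs A = {\<sigma>. (\<forall>v\<in>A. \<sigma> v = 1 \<or> \<sigma> v = -1) \<and> (\<forall>v. v \<notin> A \<longrightarrow> \<sigma> v = 0)}"

text \<open>Hamiltonian with boundary condition s (s = 1 for plus, s = -1 for minus) and field g.
  The nearest-neighbour sum runs over unordered edges {u,v}: the sum over ordered
  pairs is halved.\<close>
definition hamiltonian :: "site set \<Rightarrow> (site \<Rightarrow> real) \<Rightarrow> real \<Rightarrow> (site \<Rightarrow> real) \<Rightarrow> real" where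
  "hamiltonian A g s \<sigma> =
     - ( (1/2) * (\<Sum>(u,v)\<in>{(u,v). u \<in> A \<and> v \<in> A \<and> adj u v}. \<sigma> u * \<sigma> v)
       + s * (\<Sum>(u,v)\<in>{(u,v). u \<in> A \<and> v \<in> bdry A \<and> adj u v}. \<sigma> u)
       + (\<Sum>u\<in>A. \<sigma> u * g u))"

definition unique_ground_state :: "site set \<Rightarrow> (site \<Rightarrow> real) \<Rightarrow> real \<Rightarrow> (site \<Rightarrow> real) \<Rightarrow> bool" where
  "unique_ground_state A g s \<sigma> \<longleftrightarrow>
     \<sigma> \<in> configs A \<and>
     (\<forall>\<tau>\<in>configs A. \<tau> \<noteq> \<sigma> \<longrightarrow> hamiltonian A g s \<sigma> < hamiltonian A g s \<tau>)"

definition walk_in :: "site set \<Rightarrow> site \<Rightarrow> site \<Rightarrow> nat \<Rightarrow> bool" where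
  "walk_in A x y k \<longleftrightarrow> (\<exists>p::nat \<Rightarrow> site. p 0 = x \<and> p k = y \<and> (\<forall>i\<le>k. p i \<in> A)
        \<and> (\<forall>i<k. adj (p i) (p (Suc i))))"

definition graph_dist :: "site set \<Rightarrow> site \<Rightarrow> site \<Rightarrow> enat" where
  "graph_dist A x y = Inf {enat k | k. walk_in A x y k}"

definition set_graph_dist :: "site set \<Rightarrow> site set \<Rightarrow> site set \<Rightarrow> enat" where
  "set_graph_dist A A1 A2 = (INF x\<in>A1 \<inter> A. INF y\<in>A2 \<inter> A. graph_dist A x y)"

definition disagree :: "(site \<Rightarrow> real) \<Rightarrow> (site \<Rightarrow> real) \<Rightarrow> site set" where
  "disagree sp sm = {v. sp v = 1 \<and> sm v = -1}"

end

theory Submission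
  imports Defs
begin

text \<open>
  Raising the field raises ground states pointwise (the pointwise minimum and maximum of two
  ground states have at least as low a total energy as the pair itself), so the set C where both
  pairs of ground states disagree is the set where \<open>sp = 1\<close> and \<open>tm = -1\<close>. For \<open>S \<subseteq> C\<close> with
  all neighbours inside the box, exchanging sp and tm on S gains \<open>2\<Delta>|S|\<close> in field energy and
  costs at most twice the number of oriented edges between S and \<open>C - S\<close>; optimality of both
  ground states therefore bounds \<open>\<Delta>|S|\<close> by that number of edges.

  Apply this to \<open>S\<^sub>k\<close>, the union of \<open>C \<inter> \<Lambda>(N/4)\<close> and the sites reached in C from \<open>\<partial>\<Lambda>(N/4)\<close>
  in at most k steps, for \<open>k < K\<close>. By (a) these sets lie in \<open>\<Lambda>(N/2)\<close>, and every edge leaving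
  \<open>S\<^sub>k\<close> within C has an endpoint in the k-th layer (the sites outside \<open>\<Lambda>(N/4)\<close> first reached
  in step k), so \<open>\<Delta>|C \<inter> \<Lambda>(N/4)| \<le> 8|layer k|\<close>. The \<open>\<lceil>K\<rceil>\<close> layers are disjoint subsets of the
  annulus, and summing gives \<open>K\<Delta>|C \<inter> \<Lambda>(N/4)| \<le> 8|C \<inter> \<A>(N/2)|\<close>, contradicting (b).
\<close>

section \<open>Monotonicity of ground states in the field\<close>

lemma configs_values: "\<sigma> \<in> configs A \<Longrightarrow> v \<in> A \<Longrightarrow> \<sigma> v = 1 \<or> \<sigma> v = -1"
  by (simp add: configs_def)

lemma configs_outside: "\<sigma> \<in> configs A \<Longrightarrow> v \<notin> A \<Longrightarrow> \<sigma> v = 0"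
  unfolding configs_def by blast

lemma configs_bounds:
  assumes "\<sigma> \<in> configs A" shows "-1 \<le> \<sigma> v \<and> \<sigma> v \<le> 1"
  using configs_values[OF assms, of v] configs_outside[OF assms, of v] by (cases "v \<in> A") auto

lemma configs_pointwise_choice:
  assumes "\<sigma> \<in> configs A" "\<tau> \<in> configs A" "\<And>v. f v = \<sigma> v \<or> f v = \<tau> v"
  shows "f \<in> configs A"
proof -
  have "f v = 1 \<or> f v = -1" if "v \<in> A" for v
    using assms(3)[of v] configs_values[OF assms(1) that] configs_values[OF assms(2) that] by auto
  moreover have "f v = 0" if "v \<notin> A" for v
    using assms(3)[of v] configs_outside[OF assms(1) that] configs_outside[OF assms(2) that] by auto
  ultimately show ?thesis unfolding configs_def by blast
qed

lemma disagree_subset_domain: "\<sigma> \<in> configs A \<Longrightarrow> disagree \<sigma> \<tau> \<subseteq> A"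
  unfolding disagree_def using configs_outside by fastforce

lemma ground_state_le:
  "unique_ground_state A g s \<sigma> \<Longrightarrow> \<tau> \<in> configs A \<Longrightarrow> hamiltonian A g s \<sigma> \<le> hamiltonian A g s \<tau>"
  unfolding unique_ground_state_def by (cases "\<tau> = \<sigma>") (auto intro: less_imp_le)

lemma ground_state_unique:
  "unique_ground_state A g s \<sigma> \<Longrightarrow> \<tau> \<in> configs A \<Longrightarrow> hamiltonian A g s \<tau> \<le> hamiltonian A g s \<sigma>
    \<Longrightarrow> \<tau> = \<sigma>"
  unfolding unique_ground_state_def by (meson not_less)

lemma min_max_rearrangement:
  fixes a b c d :: real
  shows "a * c + b * d \<le> min a b * min c d + max a b * max c d"
proof -
  have "0 \<le> (b - a) * (c - d)" if "a \<le> b" "d \<le> c" using that by simp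
  moreover have "0 \<le> (a - b) * (d - c)" if "b \<le> a" "c \<le> d" using that by simp
  ultimately show ?thesis by (auto simp: min_def max_def algebra_simps)
qed

lemma hamiltonian_min_max_le:
  assumes "\<And>v. v \<in> A \<Longrightarrow> g v \<le> g' v"
  shows "hamiltonian A g s (\<lambda>v. min (\<sigma> v) (\<tau> v)) + hamiltonian A g' s (\<lambda>v. max (\<sigma> v) (\<tau> v))
       \<le> hamiltonian A g s \<sigma> + hamiltonian A g' s \<tau>"
proof -
  let ?P = "{(u,v). u \<in> A \<and> v \<in> A \<and> adj u v}" and ?Q = "{(u,v). u \<in> A \<and> v \<in> bdry A \<and> adj u v}"
  have edges: "(\<Sum>(u,v)\<in>?P. \<sigma> u * \<sigma> v) + (\<Sum>(u,v)\<in>?P. \<tau> u * \<tau> v)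
     \<le> (\<Sum>(u,v)\<in>?P. min (\<sigma> u) (\<tau> u) * min (\<sigma> v) (\<tau> v))
       + (\<Sum>(u,v)\<in>?P. max (\<sigma> u) (\<tau> u) * max (\<sigma> v) (\<tau> v))"
    unfolding sum.distrib[symmetric] by (rule sum_mono) (auto intro: min_max_rearrangement)
  have boundary: "(\<Sum>(u,v)\<in>?Q. min (\<sigma> u) (\<tau> u)) + (\<Sum>(u,v)\<in>?Q. max (\<sigma> u) (\<tau> u))
     = (\<Sum>(u,v)\<in>?Q. \<sigma> u) + (\<Sum>(u,v)\<in>?Q. \<tau> u)"
    unfolding sum.distrib[symmetric] by (rule sum.cong) auto
  have field: "(\<Sum>u\<in>A. \<sigma> u * g u) + (\<Sum>u\<in>A. \<tau> u * g' u)
     \<le> (\<Sum>u\<in>A. min (\<sigma> u) (\<tau> u) * g u) + (\<Sum>u\<in>A. max (\<sigma> u) (\<tau> u) * g' u)"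
    unfolding sum.distrib[symmetric]
  proof (rule sum_mono)
    fix u assume "u \<in> A"
    then show "\<sigma> u * g u + \<tau> u * g' u \<le> min (\<sigma> u) (\<tau> u) * g u + max (\<sigma> u) (\<tau> u) * g' u"
      using min_max_rearrangement[where a="\<sigma> u" and b="\<tau> u" and c="g u" and d="g' u"] assms by simp
  qed
  show ?thesis
    unfolding hamiltonian_def using edges field arg_cong[OF boundary, of "(*) s"]
    by (simp add: distrib_left)
qed

lemma ground_state_mono:
  assumes "unique_ground_state A g s \<sigma>" "unique_ground_state A g' s \<tau>"
    and "\<And>v. v \<in> A \<Longrightarrow> g v \<le> g' v"
  shows "\<sigma> v \<le> \<tau> v"
proof -
  have configs: "\<sigma> \<in> configs A" "\<tau> \<in> configs A"
    using assms(1,2) by (auto simp: unique_ground_state_def)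
  let ?min = "\<lambda>v. min (\<sigma> v) (\<tau> v)" and ?max = "\<lambda>v. max (\<sigma> v) (\<tau> v)"
  have "?min \<in> configs A" "?max \<in> configs A"
    by (rule configs_pointwise_choice[OF configs], simp add: min_def max_def)+
  then have "hamiltonian A g' s \<tau> \<le> hamiltonian A g' s ?max"
    using ground_state_le[OF assms(2)] by blast
  with hamiltonian_min_max_le[of A g g' s \<sigma> \<tau>] assms(3)
  have "hamiltonian A g s ?min \<le> hamiltonian A g s \<sigma>"
    by fastforce
  with ground_state_unique[OF assms(1) \<open>?min \<in> configs A\<close>] have "?min = \<sigma>" .
  then show ?thesis by (metis min.absorb_iff1)
qed

lemma disagree_inter_disagree:
  assumes "\<And>v. \<sigma> v \<le> \<sigma>' v" "\<And>v. \<tau> v \<le> \<tau>' v" "\<And>v. \<sigma>' v \<le> 1" "\<And>v. -1 \<le> \<tau> v"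
  shows "disagree \<sigma> \<tau> \<inter> disagree \<sigma>' \<tau>' = disagree \<sigma> \<tau>'"
proof (intro equalityI subsetI)
  fix v assume "v \<in> disagree \<sigma> \<tau>'"
  then have "\<sigma> v = 1" "\<tau>' v = -1"
    by (simp_all add: disagree_def)
  moreover from this have "\<sigma>' v = 1" "\<tau> v = -1"
    using assms[of v] by linarith+
  ultimately show "v \<in> disagree \<sigma> \<tau> \<inter> disagree \<sigma>' \<tau>'"
    by (simp add: disagree_def)
qed (simp add: disagree_def)

lemma ground_states_disagree_eq:
  assumes "0 \<le> \<Delta>"
    and "unique_ground_state A h 1 sp" "unique_ground_state A h (-1) sm"
    and "unique_ground_state A (\<lambda>v. h v + \<Delta>) 1 tp" "unique_ground_state A (\<lambda>v. h v + \<Delta>) (-1) tm"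
  shows "disagree sp sm \<inter> disagree tp tm = disagree sp tm"
proof -
  have "sm \<in> configs A" "tp \<in> configs A"
    using assms(3,4) by (simp_all add: unique_ground_state_def)
  moreover have "h v \<le> h v + \<Delta>" for v
    using assms(1) by simp
  ultimately show ?thesis
    using ground_state_mono[OF assms(2,4)] ground_state_mono[OF assms(3,5)] configs_bounds
    by (intro disagree_inter_disagree) blast+
qed

lemma adj_sym: "adj u v \<Longrightarrow> adj v u"
  unfolding adj_def by (simp add: abs_minus_commute)

lemma neighbours_eq:
  "{v. adj u v} = {(fst u + 1, snd u), (fst u - 1, snd u), (fst u, snd u + 1), (fst u, snd u - 1)}"
  unfolding adj_def by (cases u) (auto simp: abs_if split: if_splits)

lemma finite_neighbours: "finite {v. adj u v}"
  unfolding neighbours_eq by simp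

lemma card_neighbours: "card {v. adj u v} = 4"
  unfolding neighbours_eq by simp

lemma card_adj_pairs_touching_le:
  assumes "finite R" and "E \<subseteq> {(u,v). adj u v \<and> (u \<in> R \<or> v \<in> R)}"
  shows "card E \<le> 8 * card R"
proof -
  let ?out = "Sigma R (\<lambda>u. {v. adj u v})"
  have "finite ?out"
    using assms(1) finite_neighbours by blast
  have card_out: "card ?out = 4 * card R"
    using assms(1) card_neighbours by (simp add: finite_neighbours)
  have "E \<subseteq> ?out \<union> prod.swap ` ?out"
  proof
    fix e assume "e \<in> E"
    then obtain u v where "e = (u,v)" "adj u v" "u \<in> R \<or> v \<in> R"
      using assms(2) by blast
    then show "e \<in> ?out \<union> prod.swap ` ?out"
      using adj_sym by (auto intro!: image_eqI[of _ _ "(v,u)"])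
  qed
  then have "card E \<le> card (?out \<union> prod.swap ` ?out)"
    using \<open>finite ?out\<close> by (intro card_mono) auto
  also have "\<dots> \<le> card ?out + card (prod.swap ` ?out)"
    by (rule card_Un_le)
  also have "\<dots> \<le> 8 * card R"
    using card_image_le[OF \<open>finite ?out\<close>, of prod.swap] card_out by linarith
  finally show ?thesis .
qed

lemma box_mono: "r \<le> r' \<Longrightarrow> box r \<subseteq> box r'"
  unfolding box_def by auto

lemma finite_box: "finite (box r)"
proof -
  have "box r = {-r..r} \<times> {-r..r}"
    unfolding box_def by auto
  then show ?thesis by simp
qed

lemma adj_box: "u \<in> box r \<Longrightarrow> adj u v \<Longrightarrow> v \<in> box (r + 1)"
  unfolding adj_def box_def by auto

lemma bdry_box_subset: "bdry (box r) \<subseteq> box (r + 1)"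
  unfolding bdry_def using adj_box by blast

section \<open>Exchanging two ground states on a set\<close>

definition edge_boundary :: "site set \<Rightarrow> site set \<Rightarrow> (site \<times> site) set" where
  "edge_boundary D S = {(u,v). adj u v \<and> (u \<in> S \<and> v \<in> D - S \<or> u \<in> D - S \<and> v \<in> S)}"

definition patch :: "site set \<Rightarrow> (site \<Rightarrow> real) \<Rightarrow> (site \<Rightarrow> real) \<Rightarrow> site \<Rightarrow> real" where
  "patch S \<sigma> \<tau> v = (if v \<in> S then \<sigma> v else \<tau> v)"

lemma patch_configs: "\<sigma> \<in> configs A \<Longrightarrow> \<tau> \<in> configs A \<Longrightarrow> patch S \<sigma> \<tau> \<in> configs A"
  by (rule configs_pointwise_choice[where \<sigma> = \<sigma> and \<tau> = \<tau>]) (simp_all add: patch_def)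

lemma swap_edge_energy_le:
  assumes "finite A" "a \<in> configs A" "b \<in> configs A" "S \<subseteq> disagree b a"
  defines "P \<equiv> {(u,v). u \<in> A \<and> v \<in> A \<and> adj u v}"
  shows "(\<Sum>(u,v)\<in>P. a u * a v) + (\<Sum>(u,v)\<in>P. b u * b v)
    \<le> (\<Sum>(u,v)\<in>P. patch S b a u * patch S b a v) + (\<Sum>(u,v)\<in>P. patch S a b u * patch S a b v)
      + 4 * real (card (edge_boundary (disagree b a) S))"
proof -
  let ?E = "edge_boundary (disagree b a) S"
  have on_S: "b u = 1" "a u = -1" if "u \<in> S" for u
    using assms(4) that by (auto simp: disagree_def)
  \<comment> \<open>For a pair with exactly one endpoint w outside S the swap changes the summand by
    2 (b w - a w), which is positive only if w is in disagree b a.\<close>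
  have pair: "(case x of (u,v) \<Rightarrow> a u * a v + b u * b v)
      \<le> (case x of (u,v) \<Rightarrow> patch S b a u * patch S b a v + patch S a b u * patch S a b v)
        + 4 * of_bool (x \<in> ?E)"
    if "x \<in> P" for x
  proof -
    obtain u v where x: "x = (u,v)" and uv: "u \<in> A" "v \<in> A" "adj u v"
      using \<open>x \<in> P\<close> unfolding P_def by blast
    show ?thesis
      unfolding x using on_S[of u] on_S[of v] \<open>adj u v\<close>
        configs_values[OF assms(2) uv(1)] configs_values[OF assms(3) uv(1)]
        configs_values[OF assms(2) uv(2)] configs_values[OF assms(3) uv(2)]
      by (cases "u \<in> S"; cases "v \<in> S") (auto simp: patch_def edge_boundary_def disagree_def)
  qed
  have "(\<Sum>(u,v)\<in>P. a u * a v + b u * b v)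
      \<le> (\<Sum>(u,v)\<in>P. patch S b a u * patch S b a v + patch S a b u * patch S a b v)
        + 4 * (\<Sum>x\<in>P. of_bool (x \<in> ?E))"
    unfolding sum_distrib_left sum.distrib[symmetric] by (rule sum_mono) (rule pair)
  moreover have "P \<inter> {x. x \<in> ?E} = ?E"
    using assms(4) disagree_subset_domain[OF assms(3)] by (auto simp: P_def edge_boundary_def)
  moreover have "finite P"
    unfolding P_def by (rule finite_subset[of _ "A \<times> A"]) (use assms(1) in auto)
  ultimately show ?thesis
    by (simp add: sum.distrib split_def)
qed

lemma hamiltonian_swap_le:
  assumes "finite A" "a \<in> configs A" "b \<in> configs A" "S \<subseteq> disagree b a"
    and interior: "\<And>u v. u \<in> S \<Longrightarrow> adj u v \<Longrightarrow> v \<in> A"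
  shows "hamiltonian A (\<lambda>v. g v + \<Delta>) (-1) (patch S b a) + hamiltonian A g 1 (patch S a b)
      + 2 * \<Delta> * real (card S)
    \<le> hamiltonian A (\<lambda>v. g v + \<Delta>) (-1) a + hamiltonian A g 1 b
      + 2 * real (card (edge_boundary (disagree b a) S))"
proof -
  have on_S: "b u = 1" "a u = -1" if "u \<in> S" for u
    using assms(4) that by (auto simp: disagree_def)
  have "S \<subseteq> A"
    using assms(4) disagree_subset_domain[OF assms(3)] by blast
  let ?Q = "{(u,v). u \<in> A \<and> v \<in> bdry A \<and> adj u v}"
  have "fst x \<notin> S" if "x \<in> ?Q" for x
    using that interior by (auto simp: bdry_def)
  then have boundary: "(\<Sum>(u,v)\<in>?Q. patch S b a u) = (\<Sum>(u,v)\<in>?Q. a u)"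
    "(\<Sum>(u,v)\<in>?Q. patch S a b u) = (\<Sum>(u,v)\<in>?Q. b u)"
    by (auto simp: patch_def split_def intro!: sum.cong)
  have "patch S b a u * (g u + \<Delta>) + patch S a b u * g u
      = a u * (g u + \<Delta>) + b u * g u + 2 * \<Delta> * of_bool (u \<in> S)" for u
    using on_S[of u] by (auto simp: patch_def algebra_simps)
  then have "(\<Sum>u\<in>A. patch S b a u * (g u + \<Delta>)) + (\<Sum>u\<in>A. patch S a b u * g u)
      = (\<Sum>u\<in>A. a u * (g u + \<Delta>) + b u * g u) + 2 * \<Delta> * (\<Sum>u\<in>A. of_bool (u \<in> S))"
    by (simp add: sum.distrib[symmetric] sum_distrib_left)
  also have "(\<Sum>u\<in>A. of_bool (u \<in> S)) = real (card S)"
    using assms(1) \<open>S \<subseteq> A\<close> by (simp add: Int_absorb1 inf_commute)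
  finally have field: "(\<Sum>u\<in>A. patch S b a u * (g u + \<Delta>)) + (\<Sum>u\<in>A. patch S a b u * g u)
      = (\<Sum>u\<in>A. a u * (g u + \<Delta>)) + (\<Sum>u\<in>A. b u * g u) + 2 * \<Delta> * real (card S)"
    by (simp add: sum.distrib)
  show ?thesis
    using swap_edge_energy_le[OF assms(1-4)] boundary field unfolding hamiltonian_def by linarith
qed

lemma ground_state_swap_bound:
  assumes "finite A"
    and a: "unique_ground_state A (\<lambda>v. g v + \<Delta>) (-1) a"
    and b: "unique_ground_state A g 1 b"
    and "S \<subseteq> disagree b a" and "\<And>u v. u \<in> S \<Longrightarrow> adj u v \<Longrightarrow> v \<in> A"
  shows "\<Delta> * real (card S) \<le> real (card (edge_boundary (disagree b a) S))"
proof -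
  have configs: "a \<in> configs A" "b \<in> configs A"
    using a b by (auto simp: unique_ground_state_def)
  have "hamiltonian A (\<lambda>v. g v + \<Delta>) (-1) a \<le> hamiltonian A (\<lambda>v. g v + \<Delta>) (-1) (patch S b a)"
    "hamiltonian A g 1 b \<le> hamiltonian A g 1 (patch S a b)"
    using ground_state_le[OF a] ground_state_le[OF b] patch_configs[OF configs(2,1)]
      patch_configs[OF configs] by blast+
  moreover have "hamiltonian A (\<lambda>v. g v + \<Delta>) (-1) (patch S b a) + hamiltonian A g 1 (patch S a b)
      + 2 * \<Delta> * real (card S)
    \<le> hamiltonian A (\<lambda>v. g v + \<Delta>) (-1) a + hamiltonian A g 1 b
      + 2 * real (card (edge_boundary (disagree b a) S))"
    by (rule hamiltonian_swap_le) (use assms(1,4,5) configs in auto)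
  ultimately show ?thesis
    by linarith
qed

section \<open>Layers of the disagreement set\<close>

lemma walk_in_endpoints: "walk_in C x y k \<Longrightarrow> x \<in> C \<and> y \<in> C"
  unfolding walk_in_def by (metis le0 order_refl)

lemma walk_in_refl: "x \<in> C \<Longrightarrow> walk_in C x x 0"
  unfolding walk_in_def by (rule exI[of _ "\<lambda>_. x"]) auto

lemma walk_in_snoc:
  assumes "walk_in C x u k" "adj u v" "v \<in> C"
  shows "walk_in C x v (Suc k)"
proof -
  obtain p where p: "p 0 = x" "p k = u" "\<forall>i\<le>k. p i \<in> C" "\<forall>i<k. adj (p i) (p (Suc i))"
    using assms(1) unfolding walk_in_def by blast
  show ?thesis
    unfolding walk_in_def
    by (rule exI[of _ "p(Suc k := v)"]) (use p assms(2,3) in \<open>auto simp: le_Suc_eq less_Suc_eq\<close>)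
qed

lemma walk_in_exit:
  assumes "walk_in C x u k" "x \<in> B" "u \<notin> B"
  obtains i y where "i \<le> k" "y \<in> bdry B" "walk_in C x y i"
proof -
  obtain p where p: "p 0 = x" "p k = u" "\<forall>i\<le>k. p i \<in> C" "\<forall>i<k. adj (p i) (p (Suc i))"
    using assms(1) unfolding walk_in_def by blast
  define i where "i = (LEAST i. p i \<notin> B)"
  have "p i \<notin> B"
    unfolding i_def by (rule LeastI[of _ k]) (use p(2) assms(3) in simp)
  have "i \<le> k"
    unfolding i_def by (rule Least_le) (use p(2) assms(3) in simp)
  obtain i' where i': "i = Suc i'"
    using \<open>p i \<notin> B\<close> p(1) assms(2) by (cases i) auto
  have "p i' \<in> B"
    using not_less_Least[of i' "\<lambda>i. p i \<notin> B"] i' unfolding i_def by auto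
  moreover have "adj (p i') (p i)"
    using p(4) i' \<open>i \<le> k\<close> by auto
  ultimately have "p i \<in> bdry B"
    using \<open>p i \<notin> B\<close> unfolding bdry_def by blast
  moreover have "walk_in C x (p i) i"
    unfolding walk_in_def by (rule exI[of _ p]) (use p \<open>i \<le> k\<close> in auto)
  ultimately show ?thesis
    using \<open>i \<le> k\<close> that by blast
qed

lemma walk_length_ge_set_graph_dist:
  assumes "ereal K \<le> ereal_of_enat (set_graph_dist C X Y)"
    and "x \<in> X" "y \<in> Y" "walk_in C x y i"
  shows "K \<le> real i"
proof -
  have "x \<in> X \<inter> C" "y \<in> Y \<inter> C"
    using assms(2-4) walk_in_endpoints by auto
  moreover have "graph_dist C x y \<le> enat i"
    unfolding graph_dist_def using assms(4) by (blast intro: Inf_lower)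
  ultimately have "set_graph_dist C X Y \<le> enat i"
    unfolding set_graph_dist_def by (meson INF_lower2)
  then have "ereal K \<le> ereal (real i)"
    using assms(1) by (metis ereal_of_enat_le_iff ereal_of_enat_simps(1) order_trans)
  then show ?thesis by simp
qed

definition reach_within :: "site set \<Rightarrow> site set \<Rightarrow> nat \<Rightarrow> site set" where
  "reach_within C X k = {v. \<exists>x\<in>X. \<exists>j\<le>k. walk_in C x v j}"

lemma reach_within_subset: "reach_within C X k \<subseteq> C"
  unfolding reach_within_def using walk_in_endpoints by blast

lemma reach_within_mono: "j \<le> k \<Longrightarrow> reach_within C X j \<subseteq> reach_within C X k"
  unfolding reach_within_def using order_trans by blast

lemma reach_within_start: "x \<in> X \<Longrightarrow> x \<in> C \<Longrightarrow> x \<in> reach_within C X k"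
  unfolding reach_within_def using walk_in_refl by blast

lemma reach_within_Suc:
  "v \<in> reach_within C X k \<Longrightarrow> adj v w \<Longrightarrow> w \<in> C \<Longrightarrow> w \<in> reach_within C X (Suc k)"
  unfolding reach_within_def using walk_in_snoc Suc_le_mono by blast

lemma reach_within_inside:
  assumes "X \<subseteq> B" and short: "\<And>x y i. x \<in> X \<Longrightarrow> y \<in> bdry B \<Longrightarrow> walk_in C x y i \<Longrightarrow> k < i"
  shows "reach_within C X k \<subseteq> B"
proof
  fix v assume "v \<in> reach_within C X k"
  then obtain x j where "x \<in> X" "j \<le> k" "walk_in C x v j"
    unfolding reach_within_def by blast
  show "v \<in> B"
  proof (rule ccontr)
    assume "v \<notin> B"
    then obtain i y where "i \<le> j" "y \<in> bdry B" "walk_in C x y i"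
      using walk_in_exit \<open>walk_in C x v j\<close> \<open>x \<in> X\<close> assms(1) by blast
    then show False
      using short[OF \<open>x \<in> X\<close>] \<open>j \<le> k\<close> by fastforce
  qed
qed

definition layer :: "site set \<Rightarrow> site set \<Rightarrow> site set \<Rightarrow> nat \<Rightarrow> site set" where
  "layer C X B k = reach_within C X k - B - (\<Union>j<k. reach_within C X j)"

lemma layer_subset: "layer C X B k \<subseteq> reach_within C X k - B"
  unfolding layer_def by blast

lemma finite_layer: "finite C \<Longrightarrow> finite (layer C X B k)"
  using layer_subset reach_within_subset by (metis Diff_subset finite_subset order_trans)

lemma layers_disjoint: "i \<noteq> j \<Longrightarrow> layer C X B i \<inter> layer C X B j = {}"
  unfolding layer_def by (cases "i < j") auto

lemma edge_boundary_in_layer: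
  assumes "w \<in> (C \<inter> B) \<union> reach_within C (bdry B) k"
    and "z \<in> C - ((C \<inter> B) \<union> reach_within C (bdry B) k)" and "adj w z"
  shows "w \<in> layer C (bdry B) B k"
proof -
  have "w \<notin> B"
  proof
    assume "w \<in> B"
    then have "z \<notin> B \<Longrightarrow> z \<in> bdry B"
      using \<open>adj w z\<close> unfolding bdry_def by blast
    then show False
      using assms(2) reach_within_start[of z "bdry B" C k] by blast
  qed
  moreover have "w \<notin> reach_within C (bdry B) j" if "j < k" for j
    using reach_within_Suc[of w C "bdry B" j z] reach_within_mono[of "Suc j" k C "bdry B"] that assms(2,3)
    by auto
  ultimately show ?thesis
    using assms(1) unfolding layer_def by blast
qed

lemma card_edge_boundary_le_layer:
  assumes "finite C"
  shows "card (edge_boundary C ((C \<inter> B) \<union> reach_within C (bdry B) k)) \<le> 8 * card (layer C (bdry B) B k)"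
proof (rule card_adj_pairs_touching_le[OF finite_layer[OF assms]])
  show "edge_boundary C ((C \<inter> B) \<union> reach_within C (bdry B) k)
    \<subseteq> {(u,v). adj u v \<and> (u \<in> layer C (bdry B) B k \<or> v \<in> layer C (bdry B) B k)}"
    unfolding edge_boundary_def using edge_boundary_in_layer adj_sym by blast
qed

lemma layered_edge_boundary_bound:
  assumes "finite C" and "B \<subseteq> B'" and "bdry B \<subseteq> B'" and "0 \<le> \<Delta>"
    and far: "\<And>x y i. x \<in> bdry B \<Longrightarrow> y \<in> bdry B' \<Longrightarrow> walk_in C x y i \<Longrightarrow> K \<le> real i"
    and iso: "\<And>S. C \<inter> B \<subseteq> S \<Longrightarrow> S \<subseteq> C \<inter> B'
      \<Longrightarrow> \<Delta> * real (card S) \<le> real (card (edge_boundary C S))"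
  shows "K * \<Delta> * real (card (C \<inter> B)) \<le> 8 * real (card (C \<inter> (B' - B)))"
proof -
  define m where "m = nat \<lceil>K\<rceil>"
  let ?S = "\<lambda>k. (C \<inter> B) \<union> reach_within C (bdry B) k" and ?L = "layer C (bdry B) B"
  have S_inside: "?S k \<subseteq> C \<inter> B'" if "k < m" for k
  proof -
    have "real k < K"
      using that unfolding m_def by linarith
    then have "reach_within C (bdry B) k \<subseteq> B'"
      using far by (intro reach_within_inside[OF assms(3)]) fastforce
    then show ?thesis
      using assms(2) reach_within_subset by blast
  qed
  have per_layer: "\<Delta> * real (card (C \<inter> B)) \<le> 8 * real (card (?L k))" if "k < m" for k
  proof -
    have "finite (?S k)"
      using S_inside[OF that] assms(1) by (meson finite_subset inf_le1 order_trans)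
    then have "\<Delta> * real (card (C \<inter> B)) \<le> \<Delta> * real (card (?S k))"
      using assms(4) by (intro mult_left_mono) (auto intro: card_mono)
    also have "\<dots> \<le> real (card (edge_boundary C (?S k)))"
      using iso S_inside[OF that] by blast
    also have "card (edge_boundary C (?S k)) \<le> 8 * card (?L k)"
      by (rule card_edge_boundary_le_layer[OF assms(1)])
    finally show ?thesis by simp
  qed
  have "real m * (\<Delta> * real (card (C \<inter> B))) \<le> (\<Sum>k<m. 8 * real (card (?L k)))"
    using sum_mono[of "{..<m}" "\<lambda>_. \<Delta> * real (card (C \<inter> B))"] per_layer by simp
  also have "\<dots> = 8 * real (card (\<Union>k<m. ?L k))"
    using finite_layer[OF assms(1)] layers_disjoint
    by (simp add: card_UN_disjoint sum_distrib_left[symmetric])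
  also have "card (\<Union>k<m. ?L k) \<le> card (C \<inter> (B' - B))"
    using layer_subset S_inside assms(1) by (intro card_mono) blast+
  finally have "real m * (\<Delta> * real (card (C \<inter> B))) \<le> 8 * real (card (C \<inter> (B' - B)))"
    by simp
  moreover have "K \<le> real m"
    unfolding m_def by linarith
  then have "K * (\<Delta> * real (card (C \<inter> B))) \<le> real m * (\<Delta> * real (card (C \<inter> B)))"
    by (rule mult_right_mono) (simp add: assms(4))
  ultimately show ?thesis
    by (simp add: mult.assoc)
qed

lemma disagreement_annulus_bound:
  fixes q r R :: int
  assumes "0 \<le> \<Delta>" and "q + 1 \<le> r" and "r + 1 \<le> R"
    and gs: "unique_ground_state (box R) h 1 sp" "unique_ground_state (box R) h (-1) sm"
      "unique_ground_state (box R) (\<lambda>v. h v + \<Delta>) 1 tp"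
      "unique_ground_state (box R) (\<lambda>v. h v + \<Delta>) (-1) tm"
    and far: "ereal K \<le> ereal_of_enat
      (set_graph_dist (disagree sp sm \<inter> disagree tp tm) (bdry (box q)) (bdry (box r)))"
  shows "K * \<Delta> * real (card (disagree sp sm \<inter> disagree tp tm \<inter> box q))
    \<le> 8 * real (card (disagree sp sm \<inter> disagree tp tm \<inter> (box r - box q)))"
proof -
  define C where "C = disagree sp sm \<inter> disagree tp tm"
  have C_eq: "C = disagree sp tm"
    unfolding C_def by (rule ground_states_disagree_eq[OF assms(1) gs])
  have "sp \<in> configs (box R)"
    using gs(1) by (simp add: unique_ground_state_def)
  then have "finite C"
    using C_eq disagree_subset_domain by (blast intro: finite_subset[OF _ finite_box])
  have iso: "\<Delta> * real (card S) \<le> real (card (edge_boundary C S))" if "S \<subseteq> C \<inter> box r" for S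
  proof -
    have "v \<in> box R" if "u \<in> S" "adj u v" for u v
      using adj_box box_mono[OF assms(3)] \<open>S \<subseteq> C \<inter> box r\<close> that by blast
    then show ?thesis
      using ground_state_swap_bound[OF finite_box gs(4) gs(1)] that C_eq by blast
  qed
  show ?thesis
    unfolding C_def[symmetric]
  proof (rule layered_edge_boundary_bound[OF \<open>finite C\<close>])
    show "box q \<subseteq> box r" "bdry (box q) \<subseteq> box r"
      using bdry_box_subset box_mono[OF assms(2)] box_mono[of q r] assms(2) by auto
    show "K \<le> real i" if "x \<in> bdry (box q)" "y \<in> bdry (box r)" "walk_in C x y i" for x y i
      using walk_length_ge_set_graph_dist[OF far[folded C_def] that] .
  qed (use assms(1) iso in auto)
qed

lemma dyadic_radii:
  fixes N :: int
  assumes "2 \<le> n" and "N = 2 ^ n"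
  shows "N div 4 + 1 \<le> N div 2" and "N div 2 + 1 \<le> N"
proof -
  obtain k where "n = k + 2"
    using assms(1) by (intro that[of "n - 2"]) simp
  then have "N div 4 = 2 ^ k" "N div 2 = 2 * 2 ^ k" "N = 4 * 2 ^ k"
    using assms(2) by (simp_all add: power_add)
  moreover have "(1::int) \<le> 2 ^ k"
    by simp
  ultimately show "N div 4 + 1 \<le> N div 2" "N div 2 + 1 \<le> N"
    by linarith+
qed

theorem lemma2p4:
  fixes n :: nat and N :: int and K \<Delta> :: real
    and h :: "site \<Rightarrow> real"
    and sp sm tp tm :: "site \<Rightarrow> real"
  assumes "n \<ge> 10" and "N = 2 ^ n" and "K > 0" and "\<Delta> > 0"
    and "unique_ground_state (box N) h 1 sp"
    and "unique_ground_state (box N) h (-1) sm"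
    and "unique_ground_state (box N) (\<lambda>v. h v + \<Delta>) 1 tp"
    and "unique_ground_state (box N) (\<lambda>v. h v + \<Delta>) (-1) tm"
  shows "\<not> ( ereal K \<le> ereal_of_enat
               (set_graph_dist (disagree sp sm \<inter> disagree tp tm)
                  (bdry (box (N div 4))) (bdry (box (N div 2))))
           \<and> real (card (disagree sp sm \<inter> disagree tp tm \<inter> box (N div 4))) * \<Delta>
               > 8 / K * real (card (disagree sp sm \<inter> disagree tp tm
                                     \<inter> (box (N div 2) - box (N div 4)))) )"
proof -
  have "\<not> 8 / K * x < y * \<Delta>" if "K * \<Delta> * y \<le> 8 * x" for x y
    using that assms(3) by (simp add: divide_less_eq mult_ac)
  moreover have "N div 4 + 1 \<le> N div 2" "N div 2 + 1 \<le> N"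
    using dyadic_radii assms(1,2) by simp_all
  ultimately show ?thesis
    using disagreement_annulus_bound[OF _ _ _ assms(5-8)] assms(4) by (meson less_imp_le)
qed

end
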